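(* Let $a_1,\ldots,a_k\in\mathbb R^d$ be orthonormal vectors and $u_1,\ldots,u_k\in\mathbb R^d$ unit vectors with $\|u_i-a_i\|_2^2\le\epsilon$ for all $i$. Let $U$ be the $d\times k$ matrix with $i$-th column $u_i$, let $U=X\Sigma Y$ be its singular value decomposition, and let $\tilde u_i=X\Sigma^{-1}X^\top u_i$. Then for any $\delta\in(0,1]$, for at least a $1-\delta$ fraction of $i\in[k]$, $\langle u_i,\tilde u_i\rangle\ge 1-\epsilon/(2\delta)$.
   Context: The singular value decomposition is the compact one: $X$ is $d\times k$ with orthonormal columns, $\Sigma$ is $k\times k$ diagonal with positive entries (so $U$ is assumed to have full column rank), and $Y$ is $k\times k$ orthogonal. *)

theory Defs
  imports "HOL-Analysis.Analysis"
begin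

end

theory Submission
  imports Defs
begin

text \<open>Write \<open>q\<^sub>i = \<langle>u\<^sub>i, X \<Sigma>\<^sup>-\<^sup>1 X\<^sup>T u\<^sub>i\<rangle>\<close>. Since \<open>u\<^sub>i = X \<Sigma> y\<^sub>i\<close> with \<open>y\<^sub>i\<close> the \<open>i\<close>-th column
  of \<open>Y\<close>, we get \<open>q\<^sub>i = \<langle>\<Sigma> y\<^sub>i, y\<^sub>i\<rangle> \<le> 1\<close> by Cauchy-Schwarz, and \<open>\<Sum>\<^sub>i q\<^sub>i = tr \<Sigma>\<close>.
  On the other hand \<open>\<Sum>\<^sub>i \<langle>a\<^sub>i, u\<^sub>i\<rangle> = tr (A\<^sup>T X \<Sigma> Y) = tr (Y A\<^sup>T X \<Sigma>) \<le> tr \<Sigma>\<close>, because the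
  diagonal entries of \<open>Y A\<^sup>T X\<close> are inner products of unit vectors, while
  \<open>\<langle>a\<^sub>i, u\<^sub>i\<rangle> \<ge> 1 - \<epsilon>/2\<close>. Hence the nonnegative defects \<open>1 - q\<^sub>i\<close> sum to at most \<open>k \<epsilon>/2\<close>,
  and Markov's inequality bounds the number of large defects.\<close>

lemma matrix_inv_left:
  fixes A :: "'a::semiring_1^'n^'m"
  assumes "invertible A"
  shows "matrix_inv A ** A = mat 1"
proof -
  have "\<exists>A'. A ** A' = mat 1 \<and> A' ** A = mat 1"
    using assms by (simp add: invertible_def)
  then show ?thesis
    unfolding matrix_inv_def by (rule someI2_ex) blast
qed

lemma invertible_diagonal:
  fixes S :: "'a::field^'n^'n"
  assumes "\<And>i j. i \<noteq> j \<Longrightarrow> S $ i $ j = 0" and "\<And>i. S $ i $ i \<noteq> 0"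
  shows "invertible S"
  using assms by (simp add: invertible_det_nz det_diagonal)

lemma column_matrix_mult: "column i (A ** B) = A *v column i B"
  by (simp add: column_def matrix_matrix_mult_def matrix_vector_mult_def vec_eq_iff)

lemma sum_inner_columns_eq_trace:
  fixes A B :: "real^'n^'m"
  shows "(\<Sum>i\<in>UNIV. column i A \<bullet> column i B) = trace (transpose A ** B)"
  by (simp add: trace_def matrix_matrix_mult_def transpose_def column_def inner_vec_def)

lemma inner_isometry:
  fixes X :: "real^'k^'d"
  assumes "transpose X ** X = mat 1"
  shows "(X *v v) \<bullet> (X *v w) = v \<bullet> w"
proof -
  have "(X *v v) \<bullet> (X *v w) = ((X *v v) v* X) \<bullet> w"
    by (simp add: dot_lmul_matrix)
  also have "(X *v v) v* X = v"
    by (metis transpose_matrix_vector matrix_vector_mul_assoc assms matrix_vector_mul_lid)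
  finally show ?thesis .
qed

lemma norm_isometry:
  fixes X :: "real^'k^'d"
  assumes "transpose X ** X = mat 1"
  shows "norm (X *v v) = norm v"
  using inner_isometry[OF assms, of v v] by (simp add: norm_eq_sqrt_inner)

lemma norm_column_isometry:
  fixes X :: "real^'k^'d"
  assumes "transpose X ** X = mat 1"
  shows "norm (column j X) = 1"
proof -
  have "column j X \<bullet> column j X = (transpose X ** X) $ j $ j"
    by (simp add: matrix_mult_transpose_dot_column)
  then show ?thesis
    using assms by (simp add: norm_eq_1 mat_def)
qed

lemma svd_quadratic_form:
  fixes X :: "real^'k^'d" and S :: "real^'k^'k"
  assumes "transpose X ** X = mat 1" and "invertible S"
  shows "((X ** S) *v y) \<bullet> ((X ** matrix_inv S ** transpose X) *v ((X ** S) *v y)) = (S *v y) \<bullet> y"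
proof -
  have "(X ** matrix_inv S ** transpose X) *v ((X ** S) *v y)
          = X *v ((matrix_inv S ** (transpose X ** X) ** S) *v y)"
    by (simp add: matrix_vector_mul_assoc matrix_mul_assoc)
  also have "\<dots> = X *v y"
    using assms by (simp add: matrix_inv_left)
  finally show ?thesis
    using inner_isometry[OF assms(1)] by (simp add: matrix_vector_mul_assoc[symmetric])
qed

lemma sum_columns_quadratic_form_eq_trace:
  fixes Y S :: "real^'n^'n"
  assumes "orthogonal_matrix Y"
  shows "(\<Sum>i\<in>UNIV. (S *v column i Y) \<bullet> column i Y) = trace S"
proof -
  have "(\<Sum>i\<in>UNIV. (S *v column i Y) \<bullet> column i Y)
          = (\<Sum>i\<in>UNIV. column i Y \<bullet> column i (S ** Y))"
    by (simp add: column_matrix_mult inner_commute)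
  also have "\<dots> = trace (transpose Y ** (S ** Y))"
    by (rule sum_inner_columns_eq_trace)
  also have "\<dots> = trace (S ** (Y ** transpose Y))"
    using trace_mul_sym[of "transpose Y" "S ** Y"] by (simp add: matrix_mul_assoc)
  also have "\<dots> = trace S"
    using assms by (simp add: orthogonal_matrix_def)
  finally show ?thesis .
qed

lemma trace_mult_diagonal_le:
  fixes M S :: "real^'n^'n"
  assumes "\<And>i j. i \<noteq> j \<Longrightarrow> S $ i $ j = 0" and "\<And>i. 0 \<le> S $ i $ i"
    and "\<And>i. M $ i $ i \<le> 1"
  shows "trace (M ** S) \<le> trace S"
proof -
  have "(M ** S) $ i $ i = M $ i $ i * S $ i $ i" for i
    unfolding matrix_matrix_mult_def
    by (simp, subst sum.remove[of UNIV i]) (use assms(1) in \<open>auto intro!: sum.neutral\<close>)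
  then have "trace (M ** S) = (\<Sum>i\<in>UNIV. M $ i $ i * S $ i $ i)"
    by (simp add: trace_def)
  also have "\<dots> \<le> trace S"
    unfolding trace_def using mult_right_mono[OF assms(3) assms(2)] by (intro sum_mono) simp
  finally show ?thesis .
qed

lemma trace_transpose_mult_svd_le:
  fixes A X :: "real^'k^'d" and S Y :: "real^'k^'k"
  assumes A: "transpose A ** A = mat 1" and X: "transpose X ** X = mat 1"
    and Y: "orthogonal_matrix Y"
    and S: "\<And>i j. i \<noteq> j \<Longrightarrow> S $ i $ j = 0" "\<And>i. 0 \<le> S $ i $ i"
  shows "trace (transpose A ** (X ** S ** Y)) \<le> trace S"
proof -
  have "(Y ** transpose A ** X) $ j $ j \<le> 1" for j
  proof -
    have "(Y ** transpose A ** X) $ j $ j = (A *v row j Y) \<bullet> column j X"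
      by (simp add: matrix_matrix_mult_def matrix_vector_mult_def transpose_def row_def
          column_def inner_vec_def sum_distrib_left sum_distrib_right mult_ac)
    also have "\<dots> \<le> norm (A *v row j Y) * norm (column j X)"
      by (rule norm_cauchy_schwarz)
    also have "\<dots> = 1"
      using Y by (simp add: norm_isometry[OF A] norm_column_isometry[OF X]
          orthogonal_matrix_orthonormal_rows)
    finally show ?thesis .
  qed
  then have "trace (Y ** transpose A ** X ** S) \<le> trace S"
    using S by (intro trace_mult_diagonal_le)
  moreover have "trace (transpose A ** (X ** S ** Y)) = trace (Y ** transpose A ** X ** S)"
    using trace_mul_sym[of "transpose A ** X ** S" Y] by (simp add: matrix_mul_assoc)
  ultimately show ?thesis
    by simp
qed

lemma inner_ge_of_norm_diff_power2_le:
  fixes a u :: "'a::real_inner"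
  assumes "norm u = 1" and "norm a = 1" and "(norm (u - a))\<^sup>2 \<le> \<epsilon>"
  shows "1 - \<epsilon> / 2 \<le> a \<bullet> u"
proof -
  have "(norm (u - a))\<^sup>2 = 2 - 2 * (a \<bullet> u)"
    using assms(1,2) by (simp add: power2_norm_eq_inner inner_diff_left inner_diff_right
        inner_commute norm_eq_1)
  then show ?thesis
    using assms(3) by linarith
qed

lemma card_le_threshold_ge:
  fixes f :: "'a \<Rightarrow> real" and \<delta> c :: real
  assumes "finite A" and "\<And>i. i \<in> A \<Longrightarrow> 0 \<le> f i" and "0 < \<delta>" and "0 \<le> c"
    and "sum f A \<le> \<delta> * c * card A"
  shows "(1 - \<delta>) * card A \<le> card {i\<in>A. f i \<le> c}"
proof -
  let ?B = "{i\<in>A. c < f i}"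
  have small: "real (card ?B) \<le> \<delta> * card A"
  proof (cases "c = 0")
    case True
    then have "sum f A = 0"
      using assms by (simp add: antisym sum_nonneg)
    then have "?B = {}"
      using assms(1,2) True by (simp add: sum_nonneg_eq_0_iff)
    show ?thesis
      unfolding \<open>?B = {}\<close> using \<open>0 < \<delta>\<close> by simp
  next
    case False
    have "c * card ?B = (\<Sum>i\<in>?B. c)"
      by simp
    also have "\<dots> \<le> sum f ?B"
      by (intro sum_mono) auto
    also have "\<dots> \<le> sum f A"
      using assms(1,2) by (intro sum_mono2) auto
    also have "\<dots> \<le> c * (\<delta> * card A)"
      using assms(5) by (simp add: mult_ac)
    finally show ?thesis
      using assms(4) False by (simp add: mult_le_cancel_left_pos)
  qed
  have "card {i\<in>A. f i \<le> c} = card (A - ?B)"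
    by (rule arg_cong[where f = card]) auto
  also have "\<dots> = card A - card ?B"
    using assms(1) by (intro card_Diff_subset) auto
  finally have "real (card {i\<in>A. f i \<le> c}) = real (card A) - card ?B"
    using assms(1) by (simp add: of_nat_diff card_mono)
  then show ?thesis
    using small unfolding left_diff_distrib mult_1 by linarith
qed

theorem mainTheorem11:
  fixes a u :: "'k::finite \<Rightarrow> real^'d"
    and U X :: "real^'k^'d"
    and Sigma Y :: "real^'k^'k"
    and \<epsilon> \<delta> :: real
  assumes orthonormal_a: "\<forall>i j. a i \<bullet> a j = (if i = j then 1 else 0)"
    and unit_u: "\<forall>i. norm (u i) = 1"
    and close: "\<forall>i. (norm (u i - a i))\<^sup>2 \<le> \<epsilon>"
    and U_cols: "\<forall>i. column i U = u i"
    and X_orth_cols: "transpose X ** X = mat 1"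
    and Sigma_diag: "\<forall>i j. i \<noteq> j \<longrightarrow> Sigma $ i $ j = 0"
    and Sigma_pos: "\<forall>i. Sigma $ i $ i > 0"
    and Y_orth: "orthogonal_matrix Y"
    and svd: "U = X ** Sigma ** Y"
    and delta: "0 < \<delta>" "\<delta> \<le> 1"
  shows "real (card {i. u i \<bullet> ((X ** matrix_inv Sigma ** transpose X) *v u i) \<ge> 1 - \<epsilon> / (2 * \<delta>)})
           \<ge> (1 - \<delta>) * real CARD('k)"
proof -
  define A :: "real^'k^'d" where "A = transpose (\<chi> i. a i)"
  define q where "q i = u i \<bullet> ((X ** matrix_inv Sigma ** transpose X) *v u i)" for i
  have A_cols: "column i A = a i" for i
    by (simp add: A_def row_def)
  have A_orth: "transpose A ** A = mat 1"
    using orthonormal_a by (simp add: matrix_mult_transpose_dot_column A_cols mat_def)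
  have "invertible Sigma"
    by (rule invertible_diagonal) (metis Sigma_diag, metis Sigma_pos less_irrefl)
  moreover have u_eq: "u i = (X ** Sigma) *v column i Y" for i
    using U_cols svd by (metis column_matrix_mult)
  ultimately have q_eq: "q i = (Sigma *v column i Y) \<bullet> column i Y" for i
    unfolding q_def using svd_quadratic_form[OF X_orth_cols] by metis
  have q_le: "q i \<le> 1" for i
    using norm_cauchy_schwarz[of "Sigma *v column i Y" "column i Y"] unit_u Y_orth
      norm_isometry[OF X_orth_cols, of "Sigma *v column i Y"]
    by (simp add: q_eq u_eq matrix_vector_mul_assoc orthogonal_matrix_orthonormal_columns)
  have "(\<Sum>i\<in>(UNIV::'k set). 1 - \<epsilon> / 2) \<le> (\<Sum>i\<in>UNIV. a i \<bullet> u i)"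
    using close unit_u orthonormal_a
    by (intro sum_mono inner_ge_of_norm_diff_power2_le) (auto simp: norm_eq_1)
  also have "\<dots> = trace (transpose A ** (X ** Sigma ** Y))"
    unfolding svd[symmetric] using sum_inner_columns_eq_trace[of A U] by (simp add: A_cols U_cols)
  also have "\<dots> \<le> (\<Sum>i\<in>UNIV. q i)"
    using trace_transpose_mult_svd_le[OF A_orth X_orth_cols Y_orth] Sigma_diag Sigma_pos
      sum_columns_quadratic_form_eq_trace[OF Y_orth] by (simp add: q_eq less_imp_le)
  finally have "(\<Sum>i\<in>UNIV. 1 - q i) \<le> \<delta> * (\<epsilon> / (2 * \<delta>)) * CARD('k)"
    using delta by (simp add: sum_subtractf algebra_simps)
  moreover have "0 \<le> \<epsilon>"
    using close by (meson order_trans zero_le_power2)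
  ultimately have "(1 - \<delta>) * CARD('k) \<le> card {i\<in>UNIV. 1 - q i \<le> \<epsilon> / (2 * \<delta>)}"
    using q_le delta by (intro card_le_threshold_ge) auto
  then show ?thesis
    unfolding q_def by (simp add: algebra_simps)
qed

end
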